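(* Let $n\geq a\geq 2$ be integers, and let $\ell$ be the smallest integer for which $\binom{\ell}{\lfloor \ell/2\rfloor}\geq a$. Then the Boolean lattice $(2^{[n-a+\ell]},\subseteq)$ of all subsets of $\{1,\dots,n-a+\ell\}$ ordered by inclusion contains every $n$-element poset which has an antichain of size $a$.
   Context: A poset $(U,\leq)$ contains a poset $(P,\preceq)$ if there is a subset $P'\subseteq U$ such that $(P',\leq)$ (the restriction of $\leq$ to $P'$) is isomorphic to $(P,\preceq)$; i.e. containment is as an induced subposet. An antichain is a set of pairwise incomparable elements. *)

theory Defs
  imports Main
begin

definition poset_contains :: "'b set \<Rightarrow> ('b \<Rightarrow> 'b \<Rightarrow> bool) \<Rightarrow> 'a set \<Rightarrow> ('a \<times> 'a) set \<Rightarrow> bool" where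
  "poset_contains U leU P r \<longleftrightarrow>
     (\<exists>U' \<subseteq> U. \<exists>f. bij_betw f P U' \<and>
        (\<forall>x\<in>P. \<forall>y\<in>P. (x, y) \<in> r \<longleftrightarrow> leU (f x) (f y)))"

definition is_antichain :: "'a set \<Rightarrow> ('a \<times> 'a) set \<Rightarrow> 'a set \<Rightarrow> bool" where
  "is_antichain P r A \<longleftrightarrow> A \<subseteq> P \<and> (\<forall>x\<in>A. \<forall>y\<in>A. x \<noteq> y \<longrightarrow> (x, y) \<notin> r)"

end

theory Submission
  imports Defs "HOL.Binomial_Plus"
begin

text \<open>Embed the antichain of size \<open>a\<close> injectively into the middle layer of \<open>2\<^bsup>[\<ell>]\<^esup>\<close>,
  where inclusion is equality. Then add the remaining \<open>n - a\<close> elements one by one, each time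
  choosing an element outside the antichain that is minimal or maximal among the elements placed
  so far; such an element exists, since otherwise a non-antichain element would lie strictly between
  two elements of the antichain. Each new element costs exactly one new coordinate: a new minimal
  element goes to the fresh singleton \<open>{N+1}\<close>, which is then added to the sets above it, and a new
  maximal element is handled dually by complementation.\<close>

text \<open>The images avoid \<open>{}\<close> and \<open>{1..N}\<close>; this is what keeps the singleton \<open>{N+1}\<close> and the set
  \<open>{1..N}\<close> incomparable with the images of the old elements.\<close>
definition interior_embedding :: "'a set \<Rightarrow> ('a \<times> 'a) set \<Rightarrow> ('a \<Rightarrow> nat set) \<Rightarrow> nat \<Rightarrow> bool" where
  "interior_embedding Q r f N \<longleftrightarrow>
     (\<forall>x\<in>Q. f x \<subseteq> {1..N} \<and> f x \<noteq> {} \<and> f x \<noteq> {1..N}) \<and>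
     (\<forall>x\<in>Q. \<forall>y\<in>Q. (x, y) \<in> r \<longleftrightarrow> f x \<subseteq> f y)"

lemma finite_has_minimal_wrt:
  assumes "finite S" "S \<noteq> {}" "trans r" "antisym r"
  shows "\<exists>m\<in>S. \<forall>y\<in>S. (y, m) \<in> r \<longrightarrow> y = m"
  using assms(1,2)
proof (induction S rule: finite_ne_induct)
  case (singleton x)
  then show ?case by simp
next
  case (insert x S)
  then obtain m where m: "m \<in> S" "\<forall>y\<in>S. (y, m) \<in> r \<longrightarrow> y = m" by blast
  show ?case
  proof (cases "(x, m) \<in> r")
    case True
    have "y = x" if "y \<in> insert x S" "(y, x) \<in> r" for y
    proof (rule ccontr)
      assume "y \<noteq> x"
      with that have "y \<in> S" "(y, m) \<in> r" using True \<open>trans r\<close> by (auto dest: transD)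
      then have "y = m" using m by blast
      then show False
        using \<open>y \<noteq> x\<close> \<open>(y, x) \<in> r\<close> True \<open>antisym r\<close> by (auto dest: antisymD)
    qed
    then show ?thesis by blast
  next
    case False
    then show ?thesis using m by blast
  qed
qed

lemma extremal_outside_antichain:
  assumes "refl_on Q r" "trans r" "antisym r" "finite Q"
    and "is_antichain Q r A" and "z \<in> Q - A"
  shows "\<exists>w\<in>Q - A. (\<forall>y\<in>Q. (y, w) \<in> r \<longrightarrow> y = w) \<or> (\<forall>y\<in>Q. (w, y) \<in> r \<longrightarrow> y = w)"
proof -
  have zz: "(z, z) \<in> r" using assms(1,6) by (simp add: refl_on_def)
  obtain m where m: "m \<in> Q" "(m, z) \<in> r"
    and m_min: "\<forall>y\<in>{w\<in>Q. (w, z) \<in> r}. (y, m) \<in> r \<longrightarrow> y = m"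
    using finite_has_minimal_wrt[of "{w\<in>Q. (w, z) \<in> r}" r] assms zz by auto
  obtain M where M: "M \<in> Q" "(z, M) \<in> r"
    and M_max: "\<forall>y\<in>{w\<in>Q. (z, w) \<in> r}. (y, M) \<in> r\<inverse> \<longrightarrow> y = M"
    using finite_has_minimal_wrt[of "{w\<in>Q. (z, w) \<in> r}" "r\<inverse>"] assms zz by auto
  have "\<forall>y\<in>Q. (y, m) \<in> r \<longrightarrow> y = m"
    using m m_min \<open>trans r\<close> by (blast dest: transD)
  moreover have "\<forall>y\<in>Q. (M, y) \<in> r \<longrightarrow> y = M"
    using M M_max \<open>trans r\<close> by (blast dest: transD)
  moreover have "m \<notin> A \<or> M \<notin> A"
  proof (rule ccontr)
    assume "\<not> (m \<notin> A \<or> M \<notin> A)"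
    moreover have "(m, M) \<in> r" using m M \<open>trans r\<close> by (blast dest: transD)
    ultimately have "m = M" using \<open>is_antichain Q r A\<close> by (auto simp: is_antichain_def)
    then have "z = m" using m M \<open>antisym r\<close> by (auto dest: antisymD)
    then show False using \<open>z \<in> Q - A\<close> \<open>\<not> (m \<notin> A \<or> M \<notin> A)\<close> by blast
  qed
  ultimately show ?thesis using m M by blast
qed

lemma interior_embedding_converse:
  assumes "interior_embedding Q r f N"
  shows "interior_embedding Q (r\<inverse>) (\<lambda>x. {1..N} - f x) N"
proof -
  have range: "f x \<subseteq> {1..N}" "f x \<noteq> {}" "f x \<noteq> {1..N}" if "x \<in> Q" for x
    using assms that unfolding interior_embedding_def by auto
  have "(y, x) \<in> r \<longleftrightarrow> f y \<subseteq> f x" if "x \<in> Q" "y \<in> Q" for x y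
    using assms that unfolding interior_embedding_def by auto
  moreover have "f y \<subseteq> f x \<longleftrightarrow> {1..N} - f x \<subseteq> {1..N} - f y" if "x \<in> Q" "y \<in> Q" for x y
    using range that by blast
  moreover have "{1..N} - f x \<noteq> {} \<and> {1..N} - f x \<noteq> {1..N}" if "x \<in> Q" for x
    using range[OF that] by blast
  ultimately show ?thesis unfolding interior_embedding_def by auto
qed

lemma interior_embedding_insert_minimal:
  assumes f: "interior_embedding (Q - {z}) r f N" and "0 < N"
    and "z \<in> Q" "(z, z) \<in> r" "trans r" and z_min: "\<forall>y\<in>Q. (y, z) \<in> r \<longrightarrow> y = z"
  shows "interior_embedding Q r
    (\<lambda>x. if x = z then {Suc N} else if (z, x) \<in> r then insert (Suc N) (f x) else f x) (Suc N)"
    (is "interior_embedding Q r ?f (Suc N)")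
proof -
  have f_range: "f x \<subseteq> {1..N}" "f x \<noteq> {}" "f x \<noteq> {1..N}" if "x \<in> Q" "x \<noteq> z" for x
    using f that unfolding interior_embedding_def by auto
  have f_order: "(x, y) \<in> r \<longleftrightarrow> f x \<subseteq> f y" if "x \<in> Q - {z}" "y \<in> Q - {z}" for x y
    using f that unfolding interior_embedding_def by auto
  have fresh: "Suc N \<notin> f x" if "x \<in> Q" "x \<noteq> z" for x
    using f_range(1)[OF that] by auto
  have range: "?f x \<subseteq> {1..Suc N} \<and> ?f x \<noteq> {} \<and> ?f x \<noteq> {1..Suc N}" if "x \<in> Q" for x
  proof (cases "x = z")
    case True
    then show ?thesis using \<open>0 < N\<close> by (auto simp: set_eq_iff)
  next
    case False
    with f_range[OF that] obtain i where "i \<in> {1..N}" "i \<notin> f x" by blast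
    then have "i \<in> {1..Suc N} - ?f x" using False by auto
    then show ?thesis using f_range[OF that False] False by auto
  qed
  have "(x, y) \<in> r \<longleftrightarrow> ?f x \<subseteq> ?f y" if "x \<in> Q" "y \<in> Q" for x y
  proof (cases "x = z"; cases "y = z")
    assume "x = z" "y \<noteq> z"
    then show ?thesis using f_range[OF that(2)] by auto
  next
    assume "x \<noteq> z" "y = z"
    moreover have "\<not> f x \<subseteq> {Suc N}" using f_range[OF that(1) \<open>x \<noteq> z\<close>] by auto
    ultimately show ?thesis using z_min that by auto
  next
    assume xy: "x \<noteq> z" "y \<noteq> z"
    then have "?f x \<subseteq> ?f y \<longleftrightarrow> f x \<subseteq> f y \<and> ((z, x) \<in> r \<longrightarrow> (z, y) \<in> r)"
      using fresh that by auto
    then show ?thesis using f_order that xy \<open>trans r\<close> by (blast dest: transD)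
  qed (use \<open>(z, z) \<in> r\<close> in simp)
  with range show ?thesis unfolding interior_embedding_def by blast
qed

lemma interior_embedding_insert_extremal:
  assumes "interior_embedding (Q - {z}) r f N" "0 < N"
    and "z \<in> Q" "(z, z) \<in> r" "trans r"
    and "(\<forall>y\<in>Q. (y, z) \<in> r \<longrightarrow> y = z) \<or> (\<forall>y\<in>Q. (z, y) \<in> r \<longrightarrow> y = z)"
  shows "\<exists>f'. interior_embedding Q r f' (Suc N)"
  using assms(6)
proof
  assume z_min: "\<forall>y\<in>Q. (y, z) \<in> r \<longrightarrow> y = z"
  show ?thesis
    by (intro exI) (rule interior_embedding_insert_minimal[OF assms(1-5) z_min])
next
  assume z_max: "\<forall>y\<in>Q. (z, y) \<in> r \<longrightarrow> y = z"
  have "\<exists>g. interior_embedding Q (r\<inverse>) g (Suc N)"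
    by (intro exI, rule interior_embedding_insert_minimal[OF interior_embedding_converse[OF assms(1)]])
      (use assms(2-5) z_max in auto)
  then obtain g where "interior_embedding Q (r\<inverse>) g (Suc N)" ..
  from interior_embedding_converse[OF this] show ?thesis by auto
qed

lemma interior_embedding_extend:
  assumes "refl_on Q r" "trans r" "antisym r" "finite Q"
    and "is_antichain Q r A" and "interior_embedding A r g N" and "0 < N"
  shows "\<exists>f. interior_embedding Q r f (N + card (Q - A))"
  using assms(1,4,5)
proof (induction "card (Q - A)" arbitrary: Q)
  case 0
  then have "Q = A" by (auto simp: is_antichain_def)
  then show ?case using assms(6) by auto
next
  case (Suc k)
  have "Q - A \<noteq> {}" using Suc.hyps(2) by (metis card.empty nat.distinct(1))
  then obtain z where z: "z \<in> Q - A"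
    and z_extremal: "(\<forall>y\<in>Q. (y, z) \<in> r \<longrightarrow> y = z) \<or> (\<forall>y\<in>Q. (z, y) \<in> r \<longrightarrow> y = z)"
    using extremal_outside_antichain[OF Suc.prems(1) assms(2,3) Suc.prems(2,3)] by blast
  have "Q - {z} - A = Q - A - {z}" by blast
  then have "k = card (Q - {z} - A)" using Suc.hyps(2) Suc.prems(2) z by simp
  moreover have "refl_on (Q - {z}) r" "finite (Q - {z})" "is_antichain (Q - {z}) r A"
    using Suc.prems z by (auto simp: refl_on_def is_antichain_def)
  ultimately obtain f where f: "interior_embedding (Q - {z}) r f (N + k)"
    using Suc.hyps(1) by blast
  have "(z, z) \<in> r" using Suc.prems(1) z by (auto simp: refl_on_def)
  moreover have "0 < N + k" using assms(7) by simp
  ultimately obtain f' where "interior_embedding Q r f' (Suc (N + k))"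
    using interior_embedding_insert_extremal[OF f _ _ _ assms(2) z_extremal] z by blast
  moreover have "Suc (N + k) = N + card (Q - A)" using Suc.hyps(2) by simp
  ultimately show ?case by auto
qed

lemma interior_embedding_antichain:
  assumes "is_antichain P r A" "refl_on A r" "finite A"
    and "card A \<le> l choose k" "0 < k" "k < l"
  shows "\<exists>g. interior_embedding A r g l"
proof -
  define layer where "layer = {S. S \<subseteq> {1..l} \<and> card S = k}"
  have "card layer = l choose k" unfolding layer_def by (simp add: n_subsets)
  moreover have "finite layer" unfolding layer_def by simp
  ultimately obtain g where g: "g ` A \<subseteq> layer" "inj_on g A"
    using card_le_inj[of A layer] assms(3,4) by auto
  have "(x, y) \<in> r \<longleftrightarrow> g x \<subseteq> g y" if "x \<in> A" "y \<in> A" for x y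
  proof
    assume "(x, y) \<in> r"
    then show "g x \<subseteq> g y" using assms(1) that by (auto simp: is_antichain_def)
  next
    assume "g x \<subseteq> g y"
    moreover have "finite (g y)" "card (g x) = card (g y)"
      using g(1) that by (auto simp: layer_def intro: finite_subset)
    ultimately have "x = y" using card_subset_eq g(2) that by (metis inj_onD)
    then show "(x, y) \<in> r" using assms(2) that by (simp add: refl_on_def)
  qed
  moreover have "g x \<noteq> {} \<and> g x \<noteq> {1..l}" if "x \<in> A" for x
    using g(1) that assms(5,6) by (auto simp: layer_def)
  ultimately have "interior_embedding A r g l"
    using g(1) unfolding interior_embedding_def layer_def by blast
  then show ?thesis by blast
qed

lemma interior_embedding_poset_contains:
  assumes "interior_embedding Q r f N" "antisym r"
  shows "poset_contains (Pow {1..N}) (\<subseteq>) Q r"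
proof -
  have order: "\<forall>x\<in>Q. \<forall>y\<in>Q. (x, y) \<in> r \<longleftrightarrow> f x \<subseteq> f y"
    using assms(1) by (simp add: interior_embedding_def)
  have "inj_on f Q"
  proof (rule inj_onI)
    fix x y assume "x \<in> Q" "y \<in> Q" "f x = f y"
    then have "(x, y) \<in> r" "(y, x) \<in> r" using order by auto
    with \<open>antisym r\<close> show "x = y" by (rule antisymD)
  qed
  moreover have "f ` Q \<subseteq> Pow {1..N}" using assms(1) by (auto simp: interior_embedding_def)
  ultimately show ?thesis
    unfolding poset_contains_def using order by (blast intro: inj_on_imp_bij_betw)
qed

lemma Least_central_binomial_ge:
  fixes a :: nat
  assumes "2 \<le> a"
  defines "l \<equiv> LEAST l. a \<le> l choose (l div 2)"
  shows "a \<le> l choose (l div 2)" and "2 \<le> l"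
proof -
  have "a \<le> a choose (a div 2)" using binomial_maximum[of a 1] by simp
  then show l_ge: "a \<le> l choose (l div 2)" unfolding l_def by (rule LeastI)
  show "2 \<le> l"
  proof (rule ccontr)
    assume "\<not> 2 \<le> l"
    then have "l choose (l div 2) = 1" by (cases l) auto
    then show False using l_ge assms(1) by simp
  qed
qed

theorem lemma3p2:
  fixes n a :: nat and P :: "'a set" and r :: "('a \<times> 'a) set"
  assumes "2 \<le> a" and "a \<le> n"
    and "finite P" and "card P = n"
    and "partial_order_on P r"
    and "\<exists>A. is_antichain P r A \<and> card A = a"
  shows "poset_contains (Pow {1 .. n - a + (LEAST l::nat. a \<le> l choose (l div 2))}) (\<subseteq>) P r"
proof -
  obtain A where A: "is_antichain P r A" "card A = a" using assms(6) by blast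
  have "A \<subseteq> P" using A(1) by (simp add: is_antichain_def)
  have po: "refl_on P r" "trans r" "antisym r"
    using assms(5) by (auto simp: partial_order_on_def preorder_on_def)
  define l where "l = (LEAST l::nat. a \<le> l choose (l div 2))"
  have "a \<le> l choose (l div 2)" "2 \<le> l"
    using Least_central_binomial_ge[OF assms(1)] unfolding l_def by auto
  then have "card A \<le> l choose (l div 2)" "0 < l div 2" "l div 2 < l" "0 < l"
    using A(2) by auto
  moreover have "refl_on A r" "finite A"
    using po(1) \<open>A \<subseteq> P\<close> assms(3) by (auto simp: refl_on_def intro: finite_subset)
  ultimately obtain g where "interior_embedding A r g l"
    using interior_embedding_antichain[OF A(1)] by blast
  then obtain f where f: "interior_embedding P r f (l + card (P - A))"
    using interior_embedding_extend[OF po assms(3) A(1)] \<open>0 < l\<close> by blast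
  have "l + card (P - A) = n - a + l"
    using card_Diff_subset[OF \<open>finite A\<close> \<open>A \<subseteq> P\<close>] assms(4) A(2) by simp
  with f have "interior_embedding P r f (n - a + l)" by simp
  from interior_embedding_poset_contains[OF this po(3)] show ?thesis by (simp add: l_def)
qed

end
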